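(* Let $n\geqslant 2$. Then the semigroup $\mathbf{I}\mathbb{N}_{\infty}^n$ is isomorphic to the semidirect product $\mathscr{S}_n\ltimes_{\mathfrak{h}}(\mathscr{P}_{\infty}(\mathbb{N}^n),\cup)$ of the free semilattice with unit $(\mathscr{P}_{\infty}(\mathbb{N}^n),\cup)$ by the symmetric group $\mathscr{S}_n$, where $\sigma\in\mathscr{S}_n$ acts on a finite set $F\subseteq\mathbb{N}^n$ by $(F)\mathfrak{h}_\sigma=(F)\alpha_\sigma=\{(\mathbf{x})\alpha_\sigma\colon\mathbf{x}\in F\}$. Equivalently, $\mathbf{I}\mathbb{N}_{\infty}^n\cong H(\mathbb{I})\ltimes_{\mathfrak{h}}E(\mathbf{I}\mathbb{N}_{\infty}^n)$ with $(\varepsilon)\mathfrak{h}_\sigma=\sigma^{-1}\varepsilon\sigma$, via $\alpha\mapsto(\sigma_\alpha,\alpha^{-1}\alpha)$, where $\sigma_\alpha$ is the unique unit with $\alpha=\sigma_\alpha\varepsilon$ for some idempotent $\varepsilon$.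
   Context: $\mathbb{N}=\{1,2,3,\ldots\}$, $n\geqslant 2$, and $\mathbb{N}^n$ carries the Euclidean metric $d$. A partial isometry of $\mathbb{N}^n$ is an injective partial map $\alpha\colon\mathbb{N}^n\rightharpoonup\mathbb{N}^n$ with $d((\mathbf{x})\alpha,(\mathbf{y})\alpha)=d(\mathbf{x},\mathbf{y})$ for all $\mathbf{x},\mathbf{y}\in\operatorname{dom}\alpha$; it is cofinite if $\mathbb{N}^n\setminus\operatorname{dom}\alpha$ and $\mathbb{N}^n\setminus\operatorname{ran}\alpha$ are finite. $\mathbf{I}\mathbb{N}_{\infty}^n$ is the monoid of all partial cofinite isometries of $\mathbb{N}^n$ under composition of partial maps written on the right: $\mathbf{x}(\alpha\beta)=(\mathbf{x}\alpha)\beta$. Its identity is the identity map $\mathbb{I}$, $H(\mathbb{I})$ is its group of units and $E(\mathbf{I}\mathbb{N}_{\infty}^n)$ its semilattice of idempotents. $\mathscr{S}_n$ is the group of permutations of $\{1,\ldots,n\}$ acting on the right (composed left to right); for $\sigma\in\mathscr{S}_n$, $\alpha_\sigma$ is the isometry $(x_1,\ldots,x_n)\alpha_\sigma=(y_1,\ldots,y_n)$ with $y_{(i)\sigma}=x_i$. $(\mathscr{P}_{\infty}(X),\cup)$ is the semilattice of all finite subsets of $X$ (including $\emptyset$) under union. For semigroups $A,B$ and a homomorphism $\mathfrak{h}\colon A\to\operatorname{End}(B)$, $a\mapsto\mathfrak{h}_a$ (endomorphisms written on the right, composed left to right), the semidirect product $A\ltimes_{\mathfrak{h}}B$ is $A\times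 B$ with multiplication $(a_1,b_1)(a_2,b_2)=(a_1a_2,(b_1)\mathfrak{h}_{a_2}\,b_2)$. *)

theory Defs
  imports Complex_Main "HOL-Combinatorics.Permutations"
begin

text \<open>Points of N^n (N = {1,2,...}) are encoded as functions nat => nat whose
  coordinates 0..n-1 are >= 1 and which vanish at indices >= n.\<close>

definition Pts :: "nat \<Rightarrow> (nat \<Rightarrow> nat) set" where
  "Pts n = {x. (\<forall>i<n. 1 \<le> x i) \<and> (\<forall>i\<ge>n. x i = 0)}"

definition edist :: "nat \<Rightarrow> (nat \<Rightarrow> nat) \<Rightarrow> (nat \<Rightarrow> nat) \<Rightarrow> real" where
  "edist n x y = sqrt (\<Sum>i<n. (real (x i) - real (y i))^2)"

definition partial_isometry :: "nat \<Rightarrow> ((nat \<Rightarrow> nat) \<rightharpoonup> (nat \<Rightarrow> nat)) \<Rightarrow> bool" where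
  "partial_isometry n a \<longleftrightarrow> dom a \<subseteq> Pts n \<and> ran a \<subseteq> Pts n \<and> inj_on a (dom a) \<and>
     (\<forall>x\<in>dom a. \<forall>y\<in>dom a. edist n (the (a x)) (the (a y)) = edist n x y)"

definition cofinite_pmap :: "nat \<Rightarrow> ((nat \<Rightarrow> nat) \<rightharpoonup> (nat \<Rightarrow> nat)) \<Rightarrow> bool" where
  "cofinite_pmap n a \<longleftrightarrow> finite (Pts n - dom a) \<and> finite (Pts n - ran a)"

definition INinf :: "nat \<Rightarrow> ((nat \<Rightarrow> nat) \<rightharpoonup> (nat \<Rightarrow> nat)) set" where
  "INinf n = {a. partial_isometry n a \<and> cofinite_pmap n a}"

text \<open>Composition of partial maps written on the right: x(ab) = (xa)b.\<close>
definition pcomp :: "('a \<rightharpoonup> 'a) \<Rightarrow> ('a \<rightharpoonup> 'a) \<Rightarrow> ('a \<rightharpoonup> 'a)" where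
  "pcomp a b = b \<circ>\<^sub>m a"

text \<open>S_n: permutations of the index set {0..n-1}, acting on the right and composed
  left to right: i(st) = (is)t.\<close>
definition Sym :: "nat \<Rightarrow> (nat \<Rightarrow> nat) set" where
  "Sym n = {s. s permutes {..<n}}"

definition sym_mult :: "(nat \<Rightarrow> nat) \<Rightarrow> (nat \<Rightarrow> nat) \<Rightarrow> (nat \<Rightarrow> nat)" where
  "sym_mult s t = t \<circ> s"

text \<open>alpha_sigma: (x alpha_sigma) = y with y_(i sigma) = x_i, i.e. y_j = x_(sigma^-1 j).\<close>
definition alpha_perm :: "(nat \<Rightarrow> nat) \<Rightarrow> (nat \<Rightarrow> nat) \<Rightarrow> (nat \<Rightarrow> nat)" where
  "alpha_perm s x = (\<lambda>j. x (inv s j))"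

definition hact :: "(nat \<Rightarrow> nat) \<Rightarrow> (nat \<Rightarrow> nat) set \<Rightarrow> (nat \<Rightarrow> nat) set" where
  "hact s F = alpha_perm s ` F"

definition SDP :: "nat \<Rightarrow> ((nat \<Rightarrow> nat) \<times> (nat \<Rightarrow> nat) set) set" where
  "SDP n = Sym n \<times> {F. finite F \<and> F \<subseteq> Pts n}"

definition sdp_mult :: "((nat \<Rightarrow> nat) \<times> (nat \<Rightarrow> nat) set) \<Rightarrow> ((nat \<Rightarrow> nat) \<times> (nat \<Rightarrow> nat) set)
    \<Rightarrow> ((nat \<Rightarrow> nat) \<times> (nat \<Rightarrow> nat) set)" where
  "sdp_mult p q = (sym_mult (fst p) (fst q), hact (fst q) (snd p) \<union> snd q)"

end

theory Submission
  imports Defs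
begin

text \<open>
  Let \<open>\<alpha>\<close> be a cofinite partial isometry. Beyond some bound \<open>M\<close>, every point with a coordinate
  larger than \<open>M\<close> lies in both the domain and the range of \<open>\<alpha>\<close>. Around a base point far out,
  \<open>\<alpha>\<close> sends each unit step \<open>e\<^sub>i\<close> to some \<open>\<plusminus>e\<^sub>j\<close>, and since \<open>\<alpha>\<close> preserves inner
  products of differences it acts on coordinates as \<open>x\<^sub>i \<mapsto> \<plusminus>x\<^sub>i + c\<close> in coordinate \<open>j\<close>.
  The sign is \<open>+\<close> because coordinates stay positive as \<open>x\<^sub>i\<close> grows, and \<open>c = 0\<close> because points
  with \<open>x\<^sub>i = 1\<close> but another coordinate large are in the domain and in the range; this is where
  \<open>n \<ge> 2\<close> is needed (for \<open>n = 1\<close> the shifts \<open>x \<mapsto> x + c\<close> are counterexamples).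
  So \<open>\<alpha>\<close> is the restriction of some \<open>\<alpha>\<^sub>\<sigma>\<close>, and it is determined by \<open>\<sigma>\<close> together with the finite
  complement \<open>F\<close> of its range; the composite of the maps with data \<open>(\<sigma>, F)\<close> and \<open>(\<tau>, G)\<close> has data
  \<open>(\<sigma>\<tau>, F\<alpha>\<^sub>\<tau> \<union> G)\<close>, which is the multiplication of the semidirect product.
\<close>

lemma alpha_perm_apply:
  assumes "s permutes S"
  shows "alpha_perm s x (s i) = x i"
  using permutes_inverses(2)[OF assms] by (simp add: alpha_perm_def)

lemma alpha_perm_inv_cancel:
  assumes "s permutes S"
  shows "alpha_perm s (alpha_perm (inv s) x) = x" and "alpha_perm (inv s) (alpha_perm s x) = x"
  using inv_inv_eq[OF permutes_bij[OF assms]] permutes_inverses[OF assms]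
  by (simp_all add: alpha_perm_def)

lemma alpha_perm_inject:
  assumes "s permutes S"
  shows "alpha_perm s x = alpha_perm s y \<longleftrightarrow> x = y"
  by (metis alpha_perm_inv_cancel(2)[OF assms])

lemma alpha_perm_comp:
  assumes "s permutes S" and "t permutes S"
  shows "alpha_perm t (alpha_perm s x) = alpha_perm (t \<circ> s) x"
  using o_inv_distrib[OF permutes_bij[OF assms(2)] permutes_bij[OF assms(1)]]
  by (simp add: alpha_perm_def)

lemma alpha_perm_in_Pts:
  assumes "s permutes {..<n}" and "x \<in> Pts n"
  shows "alpha_perm s x \<in> Pts n"
  using assms(2) permutes_in_image[OF permutes_inv[OF assms(1)]] permutes_not_in[OF permutes_inv[OF assms(1)]]
  unfolding Pts_def alpha_perm_def by auto

lemma alpha_perm_eqI: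
  assumes "s permutes {..<n}" and "x \<in> Pts n" and "y \<in> Pts n" and "\<And>i. i < n \<Longrightarrow> y (s i) = x i"
  shows "y = alpha_perm s x"
proof
  fix j
  show "y j = alpha_perm s x j"
  proof (cases "j < n")
    case True
    then have "j \<in> s ` {..<n}" using permutes_image[OF assms(1)] by simp
    then obtain i where "i < n" and "j = s i" by blast
    then show ?thesis using assms(4) alpha_perm_apply[OF assms(1), of x i] by simp
  next
    case False
    then show ?thesis
      using assms(2,3) permutes_not_in[OF permutes_inv[OF assms(1)]] by (simp add: Pts_def alpha_perm_def)
  qed
qed

definition sq_dist :: "nat \<Rightarrow> (nat \<Rightarrow> nat) \<Rightarrow> (nat \<Rightarrow> nat) \<Rightarrow> int" where
  "sq_dist n x y = (\<Sum>j<n. (int (x j) - int (y j))\<^sup>2)"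

definition inner_at :: "nat \<Rightarrow> (nat \<Rightarrow> nat) \<Rightarrow> (nat \<Rightarrow> nat) \<Rightarrow> (nat \<Rightarrow> nat) \<Rightarrow> int" where
  "inner_at n w u v = (\<Sum>j<n. (int (u j) - int (w j)) * (int (v j) - int (w j)))"

lemma edist_eq_iff_sq_dist_eq: "edist n x y = edist n u v \<longleftrightarrow> sq_dist n x y = sq_dist n u v"
proof -
  have "edist n x y = sqrt (real_of_int (sq_dist n x y))" for x y
    by (simp add: edist_def sq_dist_def)
  then show ?thesis by simp
qed

lemma sq_dist_alpha_perm:
  assumes "s permutes {..<n}"
  shows "sq_dist n (alpha_perm s x) (alpha_perm s y) = sq_dist n x y"
  unfolding sq_dist_def alpha_perm_def
  using sum.permute[OF permutes_inv[OF assms], of "\<lambda>i. (int (x i) - int (y i))\<^sup>2"]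
  by (simp add: o_def)

lemma inner_at_polarization:
  "2 * inner_at n w u v = sq_dist n u w + sq_dist n v w - sq_dist n u v"
proof -
  have "sq_dist n u w + sq_dist n v w - sq_dist n u v
      = (\<Sum>j<n. (int (u j) - int (w j))\<^sup>2 + (int (v j) - int (w j))\<^sup>2 - (int (u j) - int (v j))\<^sup>2)"
    by (simp add: sq_dist_def sum.distrib sum_subtractf)
  also have "\<dots> = (\<Sum>j<n. 2 * ((int (u j) - int (w j)) * (int (v j) - int (w j))))"
    by (rule sum.cong) (auto simp: power2_eq_square algebra_simps)
  finally show ?thesis by (simp add: inner_at_def sum_distrib_left)
qed

lemma sum_power2_eq_1_int:
  fixes q :: "'a \<Rightarrow> int"
  assumes "finite I" and "(\<Sum>j\<in>I. (q j)\<^sup>2) = 1"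
  shows "\<exists>j\<in>I. (q j)\<^sup>2 = 1 \<and> (\<forall>k\<in>I. k \<noteq> j \<longrightarrow> q k = 0)"
proof -
  obtain j where j: "j \<in> I" "q j \<noteq> 0"
    using assms(2) by (metis (mono_tags, lifting) power_zero_numeral sum.neutral zero_neq_one)
  have split: "(q j)\<^sup>2 + (\<Sum>k\<in>I-{j}. (q k)\<^sup>2) = 1"
    using assms j by (simp add: sum.remove)
  have "(q j)\<^sup>2 > 0" using j(2) by simp
  moreover have "(\<Sum>k\<in>I-{j}. (q k)\<^sup>2) \<ge> 0" by (simp add: sum_nonneg)
  ultimately have "(q j)\<^sup>2 = 1" and rest: "(\<Sum>k\<in>I-{j}. (q k)\<^sup>2) = 0"
    using split by linarith+
  moreover have "\<forall>k\<in>I-{j}. q k = 0"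
    using rest sum_nonneg_eq_0_iff[of "I-{j}" "\<lambda>k. (q k)\<^sup>2"] assms(1) by simp
  ultimately show ?thesis using j(1) by blast
qed

definition far_points :: "nat \<Rightarrow> nat \<Rightarrow> (nat \<Rightarrow> nat) set" where
  "far_points n M = {x \<in> Pts n. \<exists>k<n. M < x k}"

lemma cofinite_contains_far_points:
  assumes "finite (Pts n - D)"
  shows "\<exists>M. far_points n M \<subseteq> D"
proof -
  obtain M where M: "\<forall>c\<in>(\<lambda>(x, k). x k) ` ((Pts n - D) \<times> {..<n}). c \<le> M"
    using assms finite_nat_set_iff_bounded_le by blast
  have "far_points n M \<subseteq> D"
    using M by (force simp: far_points_def)
  then show ?thesis ..
qed

definition probe :: "nat \<Rightarrow> nat \<Rightarrow> nat \<Rightarrow> nat \<Rightarrow> nat \<Rightarrow> nat" where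
  "probe n M t i = (\<lambda>j. if j < n then if j = i then t else M + 1 else 0)"

lemma probe_in_far_points:
  assumes "1 \<le> t" and "i < n" and "M < t \<or> 2 \<le> n"
  shows "probe n M t i \<in> far_points n M"
proof -
  have "\<exists>k<n. M < probe n M t i k"
  proof (cases "M < t")
    case True
    then show ?thesis using assms(2) by (auto simp: probe_def)
  next
    case False
    define k where "k = (if i = 0 then 1 else 0::nat)"
    have "k < n" "k \<noteq> i" using False assms(3) by (auto simp: k_def)
    then show ?thesis by (auto simp: probe_def)
  qed
  then show ?thesis using assms(1) by (auto simp: far_points_def Pts_def probe_def)
qed

lemma sq_dist_probe:
  assumes "i < n"
  shows "sq_dist n (probe n M (M + 2) i) (probe n M (M + 1) i) = 1"
proof -
  have "sq_dist n (probe n M (M + 2) i) (probe n M (M + 1) i) = (\<Sum>j<n. if j = i then 1 else 0)"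
    unfolding sq_dist_def by (rule sum.cong) (auto simp: probe_def)
  then show ?thesis using assms by simp
qed

lemma inner_at_probe:
  assumes "i < n"
  shows "inner_at n (probe n M (M + 1) i) x (probe n M (M + 2) i) = int (x i) - int (M + 1)"
proof -
  have "inner_at n (probe n M (M + 1) i) x (probe n M (M + 2) i)
      = (\<Sum>j<n. if j = i then int (x i) - int (M + 1) else 0)"
    unfolding inner_at_def by (rule sum.cong) (auto simp: probe_def)
  then show ?thesis using assms by simp
qed

lemma alpha_perm_eq_on_cofinite_imp_eq:
  assumes s: "s permutes {..<n}" and t: "t permutes {..<n}" and "finite (Pts n - D)"
    and eq: "\<And>x. x \<in> D \<Longrightarrow> alpha_perm s x = alpha_perm t x"
  shows "s = t"
proof
  fix i
  obtain M where M: "far_points n M \<subseteq> D" using cofinite_contains_far_points[OF assms(3)] by blast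
  show "s i = t i"
  proof (cases "i < n")
    case True
    let ?x = "probe n M (M + 2) i"
    have "?x \<in> D" using M probe_in_far_points[of "M + 2" i n M] True by auto
    moreover have "alpha_perm s ?x (s i) = M + 2"
      using alpha_perm_apply[OF s] True by (simp add: probe_def)
    ultimately have "alpha_perm t ?x (s i) = M + 2" using eq[OF \<open>?x \<in> D\<close>] by simp
    moreover have "inv t (s i) < n"
      using True permutes_in_image[OF s] permutes_in_image[OF permutes_inv[OF t]] by simp
    ultimately have "inv t (s i) = i" by (auto simp: alpha_perm_def probe_def split: if_splits)
    then show ?thesis using permutes_inv_eq[OF t] by simp
  next
    case False
    then show ?thesis using permutes_not_in[OF s] permutes_not_in[OF t] by simp
  qed
qed

locale isometry_near_infinity =
  fixes n M :: nat and D :: "(nat \<Rightarrow> nat) set" and f :: "(nat \<Rightarrow> nat) \<Rightarrow> nat \<Rightarrow> nat"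
  assumes two_le_n: "2 \<le> n"
    and D_sub: "D \<subseteq> Pts n" and image_sub: "f ` D \<subseteq> Pts n"
    and far_sub_D: "far_points n M \<subseteq> D" and far_sub_image: "far_points n M \<subseteq> f ` D"
    and sq_dist_image: "\<And>x y. x \<in> D \<Longrightarrow> y \<in> D \<Longrightarrow> sq_dist n (f x) (f y) = sq_dist n x y"
begin

lemma probe_in_D: "1 \<le> t \<Longrightarrow> i < n \<Longrightarrow> probe n M t i \<in> D"
  using far_sub_D probe_in_far_points two_le_n by blast

lemma inner_at_image:
  "x \<in> D \<Longrightarrow> y \<in> D \<Longrightarrow> z \<in> D \<Longrightarrow> inner_at n (f z) (f x) (f y) = inner_at n z x y"
  using inner_at_polarization[of n "f z" "f x" "f y"] inner_at_polarization[of n z x y] sq_dist_image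
  by simp

lemma probe_image_unit:
  assumes "i < n"
  shows "\<exists>j<n. \<exists>e. e\<^sup>2 = 1 \<and> (\<forall>k<n.
           int (f (probe n M (M + 2) i) k) - int (f (probe n M (M + 1) i) k) = (if k = j then e else 0))"
proof -
  let ?q = "\<lambda>k. int (f (probe n M (M + 2) i) k) - int (f (probe n M (M + 1) i) k)"
  have "(\<Sum>k<n. (?q k)\<^sup>2) = sq_dist n (probe n M (M + 2) i) (probe n M (M + 1) i)"
    using sq_dist_image probe_in_D assms by (simp add: sq_dist_def)
  also have "\<dots> = 1" using sq_dist_probe[OF assms] .
  finally obtain j where "j < n" "(?q j)\<^sup>2 = 1" "\<forall>k<n. k \<noteq> j \<longrightarrow> ?q k = 0"
    using sum_power2_eq_1_int[of "{..<n}" ?q] by auto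
  then show ?thesis by (intro exI[of _ j] conjI exI[of _ "?q j"]) auto
qed

lemma coordinate_shift:
  assumes i: "i < n"
  shows "\<exists>j<n. \<exists>c. \<forall>x\<in>D. int (f x j) = int (x i) + c"
proof -
  let ?b = "probe n M (M + 1) i"
  obtain j e where j: "j < n" and e: "e\<^sup>2 = 1"
    and unit: "\<forall>k<n. int (f (probe n M (M + 2) i) k) - int (f ?b k) = (if k = j then e else 0)"
    using probe_image_unit[OF i] by blast
  have shift: "(int (f x j) - int (f ?b j)) * e = int (x i) - int (M + 1)" if "x \<in> D" for x
  proof -
    have "inner_at n (f ?b) (f x) (f (probe n M (M + 2) i))
        = (\<Sum>k<n. if k = j then (int (f x j) - int (f ?b j)) * e else 0)"
      unfolding inner_at_def by (rule sum.cong) (use unit in auto)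
    then show ?thesis
      using j inner_at_image[OF that] probe_in_D i inner_at_probe[OF i, where x = x] by simp
  qed
  have "e = 1"
  proof (rule ccontr)
    assume "e \<noteq> 1"
    then have "e = -1" using e power2_eq_1_iff by blast
    moreover define t where "t = f ?b j + M + 2"
    moreover have "probe n M t i \<in> D" using probe_in_D i by (simp add: t_def)
    ultimately have "int (f (probe n M t i) j) = -1"
      using shift by (fastforce simp: probe_def i)
    then show False by simp
  qed
  have "int (f x j) = int (x i) + (int (f ?b j) - int (M + 1))" if "x \<in> D" for x
  proof -
    have "int (f x j) - int (f ?b j) = int (x i) - int (M + 1)" using shift[OF that] \<open>e = 1\<close> by simp
    then show ?thesis by linarith
  qed
  then show ?thesis using j by blast
qed

lemma coordinate_image:
  assumes i: "i < n"
  shows "\<exists>j<n. \<forall>x\<in>D. f x j = x i"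
proof -
  obtain j c where j: "j < n" and c: "\<And>x. x \<in> D \<Longrightarrow> int (f x j) = int (x i) + c"
    using coordinate_shift[OF i] by blast
  have "0 \<le> c"
  proof -
    have x: "probe n M 1 i \<in> D" using probe_in_D i by simp
    then have "f (probe n M 1 i) \<in> Pts n" using image_sub by blast
    then have "1 \<le> f (probe n M 1 i) j" using j by (simp add: Pts_def)
    moreover have "probe n M 1 i i = 1" using i by (simp add: probe_def)
    ultimately show ?thesis using c[OF x] by simp
  qed
  moreover have "c \<le> 0"
  proof -
    have "probe n M 1 j \<in> far_points n M" using probe_in_far_points[of 1 j n M] two_le_n j by simp
    then have "probe n M 1 j \<in> f ` D" using far_sub_image by (rule subsetD[rotated])
    then obtain x where x: "x \<in> D" "f x = probe n M 1 j" by (metis imageE)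
    then have "x \<in> Pts n" using D_sub by blast
    then have "1 \<le> x i" using i by (simp add: Pts_def)
    moreover have "f x j = 1" using x(2) j by (simp add: probe_def)
    ultimately show ?thesis using c[OF x(1)] by simp
  qed
  ultimately have "c = 0" by simp
  then have "f x j = x i" if "x \<in> D" for x using c[OF that] by simp
  then show ?thesis using j by blast
qed

theorem agrees_with_alpha_perm: "\<exists>\<sigma>. \<sigma> permutes {..<n} \<and> (\<forall>x\<in>D. f x = alpha_perm \<sigma> x)"
proof -
  obtain \<pi> where \<pi>: "\<And>i. i < n \<Longrightarrow> \<pi> i < n \<and> (\<forall>x\<in>D. f x (\<pi> i) = x i)"
    using coordinate_image by metis
  have "inj_on \<pi> {..<n}"
  proof (rule inj_onI)
    fix i k assume ik: "i \<in> {..<n}" "k \<in> {..<n}" "\<pi> i = \<pi> k"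
    have "probe n M (M + 2) i \<in> D" using probe_in_D ik(1) by simp
    then have "probe n M (M + 2) i k = probe n M (M + 2) i i" using \<pi> ik by (metis lessThan_iff)
    then show "i = k" using ik by (auto simp: probe_def split: if_splits)
  qed
  moreover have "\<pi> ` {..<n} \<subseteq> {..<n}" using \<pi> by auto
  ultimately have "\<pi> ` {..<n} = {..<n}" by (simp add: endo_inj_surj)
  define \<sigma> where "\<sigma> i = (if i < n then \<pi> i else i)" for i
  have \<sigma>: "\<sigma> permutes {..<n}"
  proof (rule bij_imp_permutes)
    have "bij_betw \<pi> {..<n} {..<n}"
      using \<open>inj_on \<pi> {..<n}\<close> \<open>\<pi> ` {..<n} = {..<n}\<close> by (simp add: bij_betw_def)
    then show "bij_betw \<sigma> {..<n} {..<n}" by (rule bij_betw_cong[THEN iffD2, rotated]) (simp add: \<sigma>_def)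
  qed (simp add: \<sigma>_def)
  have "f x = alpha_perm \<sigma> x" if x: "x \<in> D" for x
  proof (rule alpha_perm_eqI[OF \<sigma>])
    show "x \<in> Pts n" using D_sub x by blast
    show "f x \<in> Pts n" using image_sub x by blast
    show "f x (\<sigma> i) = x i" if "i < n" for i using \<pi>[OF that] x that by (simp add: \<sigma>_def)
  qed
  with \<sigma> show ?thesis by blast
qed

end

theorem INinf_agrees_with_alpha_perm:
  assumes "2 \<le> n" and "a \<in> INinf n"
  shows "\<exists>s. s permutes {..<n} \<and> (\<forall>x\<in>dom a. a x = Some (alpha_perm s x))"
proof -
  have iso: "partial_isometry n a" and "finite (Pts n - dom a \<union> (Pts n - ran a))"
    using assms(2) by (auto simp: INinf_def cofinite_pmap_def)
  then obtain M where "far_points n M \<subseteq> dom a \<inter> ran a"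
    using cofinite_contains_far_points[of n "dom a \<inter> ran a"] by (auto simp: Diff_Int)
  moreover have "ran a = (\<lambda>x. the (a x)) ` dom a" by (force simp: ran_def)
  ultimately interpret isometry_near_infinity n M "dom a" "\<lambda>x. the (a x)"
    using assms(1) iso by unfold_locales (auto simp: partial_isometry_def edist_eq_iff_sq_dist_eq)
  show ?thesis using agrees_with_alpha_perm by (metis domD option.sel)
qed

text \<open>The element \<open>\<alpha>\<^sub>s \<epsilon>\<close> of the paper, with \<open>\<epsilon>\<close> the identity on \<open>Pts n - F\<close>.\<close>
definition restricted_perm :: "nat \<Rightarrow> (nat \<Rightarrow> nat) \<Rightarrow> (nat \<Rightarrow> nat) set \<Rightarrow> (nat \<Rightarrow> nat) \<rightharpoonup> (nat \<Rightarrow> nat)" where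
  "restricted_perm n s F x = (if x \<in> Pts n \<and> alpha_perm s x \<notin> F then Some (alpha_perm s x) else None)"

lemma dom_restricted_perm: "dom (restricted_perm n s F) = {x \<in> Pts n. alpha_perm s x \<notin> F}"
  by (auto simp: restricted_perm_def dom_def)

lemma ran_restricted_perm:
  assumes "s permutes {..<n}"
  shows "ran (restricted_perm n s F) = Pts n - F"
proof
  show "ran (restricted_perm n s F) \<subseteq> Pts n - F"
    using alpha_perm_in_Pts[OF assms] by (auto simp: ran_def restricted_perm_def split: if_splits)
  show "Pts n - F \<subseteq> ran (restricted_perm n s F)"
  proof
    fix y assume "y \<in> Pts n - F"
    then have "restricted_perm n s F (alpha_perm (inv s) y) = Some y"
      using alpha_perm_inv_cancel(1)[OF assms] alpha_perm_in_Pts[OF permutes_inv[OF assms]]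
      by (simp add: restricted_perm_def)
    then show "y \<in> ran (restricted_perm n s F)" by (auto simp: ran_def)
  qed
qed

lemma restricted_perm_in_INinf:
  assumes "(s, F) \<in> SDP n"
  shows "restricted_perm n s F \<in> INinf n"
proof -
  have s: "s permutes {..<n}" and F: "finite F" "F \<subseteq> Pts n" using assms by (auto simp: SDP_def Sym_def)
  have "Pts n - dom (restricted_perm n s F) \<subseteq> alpha_perm (inv s) ` F"
  proof
    fix x assume "x \<in> Pts n - dom (restricted_perm n s F)"
    then have "alpha_perm s x \<in> F" by (simp add: dom_restricted_perm)
    then show "x \<in> alpha_perm (inv s) ` F"
      by (rule image_eqI[rotated]) (simp add: alpha_perm_inv_cancel(2)[OF s])
  qed
  then have "finite (Pts n - dom (restricted_perm n s F))" using F(1) finite_subset by blast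
  moreover have "partial_isometry n (restricted_perm n s F)"
    using alpha_perm_in_Pts[OF s] alpha_perm_inject[OF s] sq_dist_alpha_perm[OF s]
    by (auto simp: partial_isometry_def ran_restricted_perm[OF s] dom_restricted_perm inj_on_def
        edist_eq_iff_sq_dist_eq restricted_perm_def)
  ultimately show ?thesis
    using F by (simp add: INinf_def cofinite_pmap_def ran_restricted_perm[OF s] Diff_Diff_Int)
qed

lemma pcomp_restricted_perm:
  assumes "s permutes {..<n}" and "t permutes {..<n}"
  shows "pcomp (restricted_perm n s F) (restricted_perm n t G)
       = restricted_perm n (sym_mult s t) (hact t F \<union> G)"
proof
  fix x
  have "alpha_perm t (alpha_perm s x) \<in> hact t F \<longleftrightarrow> alpha_perm s x \<in> F"
    using alpha_perm_inject[OF assms(2)] by (auto simp: hact_def)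
  then show "pcomp (restricted_perm n s F) (restricted_perm n t G) x
      = restricted_perm n (sym_mult s t) (hact t F \<union> G) x"
    using alpha_perm_in_Pts[OF assms(1)] alpha_perm_comp[OF assms]
    by (auto simp: pcomp_def map_comp_def restricted_perm_def sym_mult_def)
qed

lemma inj_on_restricted_perm: "inj_on (\<lambda>(s, F). restricted_perm n s F) (SDP n)"
proof (rule inj_onI, clarsimp)
  fix s F t G
  assume st: "(s, F) \<in> SDP n" "(t, G) \<in> SDP n" and eq: "restricted_perm n s F = restricted_perm n t G"
  then have s: "s permutes {..<n}" and t: "t permutes {..<n}" and "F \<subseteq> Pts n" "G \<subseteq> Pts n"
    by (auto simp: SDP_def Sym_def)
  moreover have "Pts n - F = Pts n - G"
    using eq ran_restricted_perm[OF s, of F] ran_restricted_perm[OF t, of G] by simp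
  ultimately have "F = G" by blast
  moreover have "s = t"
  proof (rule alpha_perm_eq_on_cofinite_imp_eq[OF s t])
    show "finite (Pts n - dom (restricted_perm n s F))"
      using restricted_perm_in_INinf[OF st(1)] by (simp add: INinf_def cofinite_pmap_def)
    fix x assume "x \<in> dom (restricted_perm n s F)"
    then obtain y where y: "restricted_perm n s F x = Some y" by blast
    then have "restricted_perm n t G x = Some y" using eq by simp
    with y show "alpha_perm s x = alpha_perm t x" by (simp add: restricted_perm_def split: if_splits)
  qed
  ultimately show "s = t \<and> F = G" by blast
qed

lemma INinf_in_image_restricted_perm:
  assumes "2 \<le> n" and a: "a \<in> INinf n"
  shows "a \<in> (\<lambda>(s, F). restricted_perm n s F) ` SDP n"
proof -
  obtain s where s: "s permutes {..<n}" and as: "\<And>x. x \<in> dom a \<Longrightarrow> a x = Some (alpha_perm s x)"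
    using INinf_agrees_with_alpha_perm[OF assms] by blast
  have dom: "dom a \<subseteq> Pts n" and "finite (Pts n - ran a)"
    using a by (auto simp: INinf_def partial_isometry_def cofinite_pmap_def)
  then have "(s, Pts n - ran a) \<in> SDP n" using s by (auto simp: SDP_def Sym_def)
  moreover have "a = restricted_perm n s (Pts n - ran a)"
  proof
    fix x
    have dom_iff: "x \<in> dom a \<longleftrightarrow> x \<in> Pts n \<and> alpha_perm s x \<in> ran a"
    proof
      assume "x \<in> dom a"
      moreover have "alpha_perm s x \<in> ran a" using ranI as[OF \<open>x \<in> dom a\<close>] by metis
      ultimately show "x \<in> Pts n \<and> alpha_perm s x \<in> ran a" using dom by blast
    next
      assume "x \<in> Pts n \<and> alpha_perm s x \<in> ran a"
      then obtain y where y: "a y = Some (alpha_perm s x)" by (auto simp: ran_def)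
      then have "y \<in> dom a" by blast
      then have "y = x" using as[of y] y alpha_perm_inject[OF s] by simp
      then show "x \<in> dom a" using \<open>y \<in> dom a\<close> by simp
    qed
    show "a x = restricted_perm n s (Pts n - ran a) x"
    proof (cases "x \<in> dom a")
      case True
      then show ?thesis using as dom_iff by (simp add: restricted_perm_def)
    next
      case False
      then have "a x = None" by (simp add: domIff)
      moreover have "x \<notin> Pts n \<or> alpha_perm s x \<in> Pts n - ran a"
        using False dom_iff alpha_perm_in_Pts[OF s] by blast
      ultimately show ?thesis by (auto simp: restricted_perm_def)
    qed
  qed
  ultimately show ?thesis
    using image_eqI[of a "\<lambda>(s, F). restricted_perm n s F" "(s, Pts n - ran a)"] by simp
qed

lemma image_restricted_perm:
  assumes "2 \<le> n"
  shows "(\<lambda>(s, F). restricted_perm n s F) ` SDP n = INinf n"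
  using restricted_perm_in_INinf INinf_in_image_restricted_perm[OF assms] by fast

lemma inv_into_hom:
  assumes "bij_betw h A B" and "\<And>p q. p \<in> A \<Longrightarrow> q \<in> A \<Longrightarrow> mult_A p q \<in> A"
    and "\<And>p q. p \<in> A \<Longrightarrow> q \<in> A \<Longrightarrow> h (mult_A p q) = mult_B (h p) (h q)"
    and "a \<in> B" and "b \<in> B"
  shows "inv_into A h (mult_B a b) = mult_A (inv_into A h a) (inv_into A h b)"
proof -
  have inv: "inv_into A h a \<in> A" "inv_into A h b \<in> A"
    using assms(1,4,5) by (auto simp: bij_betw_def inv_into_into)
  then have "mult_B a b = h (mult_A (inv_into A h a) (inv_into A h b))"
    using assms(1,3,4,5) by (simp add: bij_betw_def f_inv_into_f)
  then show ?thesis using assms(1,2) inv by (simp add: bij_betw_def inv_into_f_f)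
qed

lemma sdp_mult_closed: "p \<in> SDP n \<Longrightarrow> q \<in> SDP n \<Longrightarrow> sdp_mult p q \<in> SDP n"
  by (auto simp: SDP_def Sym_def sdp_mult_def sym_mult_def hact_def permutes_compose
      alpha_perm_in_Pts)

theorem theorem4p5:
  fixes n :: nat
  assumes "n \<ge> 2"
  shows "\<exists>\<Phi>. bij_betw \<Phi> (INinf n) (SDP n) \<and>
           (\<forall>a\<in>INinf n. \<forall>b\<in>INinf n. \<Phi> (pcomp a b) = sdp_mult (\<Phi> a) (\<Phi> b))"
proof -
  let ?\<Psi> = "\<lambda>(s, F). restricted_perm n s F"
  have bij: "bij_betw ?\<Psi> (SDP n) (INinf n)"
    using inj_on_restricted_perm image_restricted_perm[OF assms] by (simp add: bij_betw_def)
  have hom: "?\<Psi> (sdp_mult p q) = pcomp (?\<Psi> p) (?\<Psi> q)" if "p \<in> SDP n" "q \<in> SDP n" for p q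
    using that pcomp_restricted_perm by (cases p, cases q) (simp add: SDP_def Sym_def sdp_mult_def)
  show ?thesis
  proof (intro exI conjI ballI)
    show "bij_betw (inv_into (SDP n) ?\<Psi>) (INinf n) (SDP n)" using bij by (rule bij_betw_inv_into)
    show "inv_into (SDP n) ?\<Psi> (pcomp a b) = sdp_mult (inv_into (SDP n) ?\<Psi> a) (inv_into (SDP n) ?\<Psi> b)"
      if "a \<in> INinf n" "b \<in> INinf n" for a b
      using inv_into_hom[where mult_A = sdp_mult and mult_B = pcomp, OF bij sdp_mult_closed hom that] .
  qed
qed

end
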